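(* Let $\mathcal{A}$ be a pOC with state set $Q$ whose underlying chain $\mathcal{X}$ is strongly connected, and let $t$ be its trend. There is a vector $v\in\mathbb{R}^Q$ with the following two properties. - For every initial configuration, the process $m^{(0)},m^{(1)},\dots$ on runs of $\mathcal{M}_\mathcal{A}$ defined by $$m^{(i)}=\begin{cases}c^{(i)}+v_{p^{(i)}}-i\cdot t & \text{if } c^{(j)}\ge1 \text{ for all } 0\le j<i,\\ m^{(i-1)} & \text{otherwise}\end{cases}$$ is a martingale. Here $p^{(i)}$ and $c^{(i)}$ are the control state and counter value of the $i$-th configuration of the run. - $v_{\max}-v_{\min}\le 2|Q|/x_{\min}^{|Q|}$, where $x_{\min}$ is the smallest positive transition probability in $\mathcal{X}$, and $v_{\max}$ and $v_{\min}$ are the maximal and minimal components of $v$.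
   Context: A pOC is $\mathcal{A}=(Q,\delta^{=0},\delta^{>0},P^{=0},P^{>0})$ with the following components. - $\delta^{>0}\subseteq Q\times\{-1,0,1\}\times Q$ are the positive rules and $\delta^{=0}\subseteq Q\times\{0,1\}\times Q$ are the zero rules. Every state has both kinds of outgoing rule. - $P^{>0}$ and $P^{=0}$ are positive probability distributions over the outgoing rules of each state. $\mathcal{M}_\mathcal{A}$ is the Markov chain on configurations $p(i)$ with the following transitions: - $p(0)\to q(c)$ with probability $P^{=0}(p,c,q)$; - for $i\ge1$, $p(i)\to q(i+c)$ with probability $P^{>0}(p,c,q)$. $\mathcal{X}$ is the finite Markov chain on $Q$ with transition matrix $A_{pq}=\sum_cP^{>0}(p,c,q)$. With $\alpha$ its invariant distribution and $s_p=\sum_{(p,c,q)\in\delta^{>0}}P^{>0}(p,c,q)c$, the trend is $t=\alpha s$. *)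

theory Defs
  imports Complex_Main
begin

text \<open>A pOC is given by its positive rules dP (subset of Q x {-1,0,1} x Q), its zero rules
  d0 (subset of Q x {0,1} x Q), and the probability assignments PP, P0
  (functions 'q => int => 'q => real, where P p c q is the probability of rule (p,c,q)).\<close>

type_synonym 'q config = "'q \<times> nat"

definition pOC ::
  "('q::finite \<times> int \<times> 'q) set \<Rightarrow> ('q \<times> int \<times> 'q) set \<Rightarrow>
   ('q \<Rightarrow> int \<Rightarrow> 'q \<Rightarrow> real) \<Rightarrow> ('q \<Rightarrow> int \<Rightarrow> 'q \<Rightarrow> real) \<Rightarrow> bool" where
  "pOC d0 dP P0 PP \<longleftrightarrow>
     dP \<subseteq> UNIV \<times> {-1, 0, 1} \<times> UNIV \<and>
     d0 \<subseteq> UNIV \<times> {0, 1} \<times> UNIV \<and>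
     (\<forall>p. \<exists>c q. (p, c, q) \<in> dP) \<and>
     (\<forall>p. \<exists>c q. (p, c, q) \<in> d0) \<and>
     (\<forall>p c q. ((p, c, q) \<in> dP \<longrightarrow> PP p c q > 0) \<and> ((p, c, q) \<notin> dP \<longrightarrow> PP p c q = 0)) \<and>
     (\<forall>p c q. ((p, c, q) \<in> d0 \<longrightarrow> P0 p c q > 0) \<and> ((p, c, q) \<notin> d0 \<longrightarrow> P0 p c q = 0)) \<and>
     (\<forall>p. (\<Sum>q\<in>UNIV. \<Sum>c\<in>{-1, 0, 1}. PP p c q) = 1) \<and>
     (\<forall>p. (\<Sum>q\<in>UNIV. \<Sum>c\<in>{0, 1}. P0 p c q) = 1)"

definition MA_prob ::
  "('q \<Rightarrow> int \<Rightarrow> 'q \<Rightarrow> real) \<Rightarrow> ('q \<Rightarrow> int \<Rightarrow> 'q \<Rightarrow> real) \<Rightarrow> 'q config \<Rightarrow> 'q config \<Rightarrow> real" where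
  "MA_prob P0 PP x y =
     (if snd x = 0 then P0 (fst x) (int (snd y) - int (snd x)) (fst y)
      else PP (fst x) (int (snd y) - int (snd x)) (fst y))"

definition X_mat :: "('q \<Rightarrow> int \<Rightarrow> 'q \<Rightarrow> real) \<Rightarrow> 'q \<Rightarrow> 'q \<Rightarrow> real" where
  "X_mat PP p q = (\<Sum>c\<in>{-1, 0, 1}. PP p c q)"

definition strongly_connected :: "('q \<Rightarrow> 'q \<Rightarrow> real) \<Rightarrow> bool" where
  "strongly_connected A \<longleftrightarrow> (\<forall>p q. (p, q) \<in> {(a, b). A a b > 0}\<^sup>*)"

definition invariant_distribution :: "('q::finite \<Rightarrow> 'q \<Rightarrow> real) \<Rightarrow> ('q \<Rightarrow> real) \<Rightarrow> bool" where
  "invariant_distribution A \<alpha> \<longleftrightarrow>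
     (\<forall>p. \<alpha> p \<ge> 0) \<and> (\<Sum>p\<in>UNIV. \<alpha> p) = 1 \<and> (\<forall>q. (\<Sum>p\<in>UNIV. \<alpha> p * A p q) = \<alpha> q)"

definition drift :: "('q::finite \<Rightarrow> int \<Rightarrow> 'q \<Rightarrow> real) \<Rightarrow> 'q \<Rightarrow> real" where
  "drift PP p = (\<Sum>q\<in>UNIV. \<Sum>c\<in>{-1, 0, 1}. PP p c q * real_of_int c)"

definition trend :: "('q::finite \<Rightarrow> int \<Rightarrow> 'q \<Rightarrow> real) \<Rightarrow> ('q \<Rightarrow> real) \<Rightarrow> real" where
  "trend PP \<alpha> = (\<Sum>p\<in>UNIV. \<alpha> p * drift PP p)"

definition x_min :: "('q::finite \<Rightarrow> 'q \<Rightarrow> real) \<Rightarrow> real" where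
  "x_min A = Min {A p q | p q. A p q > 0}"

primrec m_proc :: "('q \<Rightarrow> real) \<Rightarrow> real \<Rightarrow> (nat \<Rightarrow> 'q config) \<Rightarrow> nat \<Rightarrow> real" where
  "m_proc v t x 0 = real (snd (x 0)) + v (fst (x 0)) - 0 * t"
| "m_proc v t x (Suc i) =
     (if \<forall>j < Suc i. snd (x j) \<ge> 1
      then real (snd (x (Suc i))) + v (fst (x (Suc i))) - real (Suc i) * t
      else m_proc v t x i)"

text \<open>Martingale property of a process M (M x i depending only on x 0, ..., x i) on the
  runs of M_A, w.r.t. the natural filtration: for every initial configuration and every
  finite run prefix x 0 ... x n of positive probability, the conditional expectation of
  M at time n+1 given the prefix equals M at time n. (The successors of (p,c) lie in
  UNIV x {..c+1}, so the sum is the full conditional expectation; all values are finite,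
  hence integrable.)\<close>
definition pOC_martingale ::
  "('q::finite \<Rightarrow> int \<Rightarrow> 'q \<Rightarrow> real) \<Rightarrow> ('q \<Rightarrow> int \<Rightarrow> 'q \<Rightarrow> real) \<Rightarrow>
   ((nat \<Rightarrow> 'q config) \<Rightarrow> nat \<Rightarrow> real) \<Rightarrow> bool" where
  "pOC_martingale P0 PP M \<longleftrightarrow>
     (\<forall>x n. (\<forall>j<n. MA_prob P0 PP (x j) (x (Suc j)) > 0) \<longrightarrow>
        (\<Sum>y\<in>UNIV \<times> {..Suc (snd (x n))}. MA_prob P0 PP (x n) y * M (x(Suc n := y)) (Suc n))
          = M x n)"

end

theory Submission
  imports Defs "HOL-Analysis.Analysis"
begin

text \<open>Let A be the matrix of X and s the drift vector, so t = \<alpha> s. If v solves the Poisson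
  equation v = s - t + A v, then c + v p - i t changes by zero on average in every step taken
  with a positive counter, so the stopped process m is a martingale. Fix a root r. The
  Dirichlet problem u r = 0, u = f + A u off r is uniquely solvable by the maximum principle
  of the irreducible chain; solving it with f = s - t gives the Poisson equation off r, and
  at r as well since \<alpha> (s - t) = 0. Comparing v with the expected hitting time h of r
  (f = 1), the comparison principle yields (-1 - t) h \<le> v - v r \<le> (1 - t) h, and
  h \<le> |Q| / x_min^|Q| because from every state r is reached within |Q| - 1 steps each of
  probability at least x_min.\<close>

lemma rtrancl_leaves_set:
  assumes "(p, r) \<in> R\<^sup>*" "p \<in> S" "r \<notin> S"
  obtains a b where "(a, b) \<in> R" "a \<in> S" "b \<notin> S"
  using assms
proof (induction rule: rtrancl_induct)
  case (step y z)
  then show ?case by (cases "y \<in> S") auto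
qed simp

lemma strongly_connected_growth_exhausts:
  fixes A :: "'q::finite \<Rightarrow> 'q \<Rightarrow> real" and S :: "nat \<Rightarrow> 'q set"
  assumes sc: "strongly_connected A" and r: "r \<in> S 0"
    and mono: "\<And>k. S k \<subseteq> S (Suc k)"
    and step: "\<And>a b k. A a b > 0 \<Longrightarrow> b \<in> S k \<Longrightarrow> a \<in> S (Suc k)"
  shows "S (CARD('q) - 1) = UNIV"
proof -
  have grow: "S k = UNIV \<or> k + 1 \<le> card (S k)" for k
  proof (induction k)
    case 0
    show ?case using r card_mono[of "S 0" "{r}"] by auto
  next
    case (Suc k)
    show ?case
    proof (cases "S k = UNIV")
      case True
      then show ?thesis using mono[of k] by auto
    next
      case False
      then obtain q where "q \<notin> S k" by auto
      moreover have "(q, r) \<in> {(a, b). A a b > 0}\<^sup>*"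
        using sc unfolding strongly_connected_def by blast
      moreover have "r \<in> S k"
        using r lift_Suc_mono_le[of S 0 k] mono by auto
      ultimately obtain a b where ab: "A a b > 0" "a \<notin> S k" "b \<in> S k"
        by (elim rtrancl_leaves_set[where S = "- S k"]) auto
      have "insert a (S k) \<subseteq> S (Suc k)" using step[OF ab(1,3)] mono[of k] by auto
      hence "Suc (card (S k)) \<le> card (S (Suc k))"
        using card_mono[of "S (Suc k)" "insert a (S k)"] ab(2) by simp
      then show ?thesis using Suc.IH False by simp
    qed
  qed
  have "CARD('q) \<ge> 1" by (simp add: Suc_leI)
  then have "S (CARD('q) - 1) = UNIV \<or> CARD('q) \<le> card (S (CARD('q) - 1))"
    using grow[of "CARD('q) - 1"] by simp
  then show ?thesis
    using card_seteq[of UNIV "S (CARD('q) - 1)"] by auto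
qed

locale irreducible_stochastic_matrix =
  fixes A :: "'q::finite \<Rightarrow> 'q \<Rightarrow> real"
  assumes nonneg: "A p q \<ge> 0"
    and row_sum: "(\<Sum>q\<in>UNIV. A p q) = 1"
    and irreducible: "strongly_connected A"
begin

lemma entry_le_one: "A p q \<le> 1"
  using member_le_sum[of q UNIV "A p"] nonneg row_sum by auto

lemma row_average_le:
  assumes "\<And>q. g q \<le> M"
  shows "(\<Sum>q\<in>UNIV. A a q * g q) \<le> A a b * g b + (1 - A a b) * M"
proof -
  have "(\<Sum>q\<in>UNIV. A a q * g q) = A a b * g b + (\<Sum>q\<in>UNIV - {b}. A a q * g q)"
    by (simp add: sum.remove)
  also have "(\<Sum>q\<in>UNIV - {b}. A a q * g q) \<le> (\<Sum>q\<in>UNIV - {b}. A a q) * M"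
    unfolding sum_distrib_right by (intro sum_mono mult_left_mono assms nonneg)
  also have "(\<Sum>q\<in>UNIV - {b}. A a q) = 1 - A a b"
    using row_sum[of a] sum.remove[of UNIV b "A a"] by simp
  finally show ?thesis by simp
qed

lemma maximum_principle:
  assumes root: "u r \<le> 0"
    and subharmonic: "\<And>p. p \<noteq> r \<Longrightarrow> u p \<le> (\<Sum>q\<in>UNIV. A p q * u q)"
  shows "u p \<le> 0"
proof -
  define M where "M = Max (range u)"
  have le_M: "u q \<le> M" for q unfolding M_def by simp
  have "M \<le> 0"
  proof (rule ccontr)
    assume "\<not> M \<le> 0"
    have "M \<in> range u" unfolding M_def by (rule Max_in) auto
    then obtain p0 where p0: "u p0 = M" by auto
    have "(p0, r) \<in> {(a, b). A a b > 0}\<^sup>*"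
      using irreducible unfolding strongly_connected_def by blast
    then obtain a b where ab: "A a b > 0" "u a = M" "u b \<noteq> M"
      using p0 root \<open>\<not> M \<le> 0\<close> by (elim rtrancl_leaves_set[where S = "{q. u q = M}"]) auto
    have "a \<noteq> r" using ab root \<open>\<not> M \<le> 0\<close> by auto
    have "u a \<le> A a b * u b + (1 - A a b) * M"
      using subharmonic[OF \<open>a \<noteq> r\<close>] row_average_le[of u M a b] le_M by fastforce
    also have "\<dots> < A a b * M + (1 - A a b) * M"
      using ab le_M[of b] by simp
    finally show False using ab by (simp add: algebra_simps)
  qed
  then show ?thesis using le_M[of p] by simp
qed

text \<open>Uniqueness for the homogeneous problem (maximum principle for u and -u) makes the
  linear map injective, hence surjective on the finite-dimensional space.\<close>
lemma dirichlet_problem_solvable: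
  "\<exists>u. u r = 0 \<and> (\<forall>p. p \<noteq> r \<longrightarrow> u p = f p + (\<Sum>q\<in>UNIV. A p q * u q))"
proof -
  define L :: "real^'q \<Rightarrow> real^'q" where
    "L w = (\<chi> p. if p = r then w $ r else w $ p - (\<Sum>q\<in>UNIV. A p q * w $ q))" for w
  have L_nth: "L w $ p = (if p = r then w $ r else w $ p - (\<Sum>q\<in>UNIV. A p q * w $ q))" for w p
    by (simp add: L_def)
  have lin: "linear L"
    by (rule linearI)
      (simp_all add: vec_eq_iff L_nth sum.distrib distrib_left sum_distrib_left
        right_diff_distrib mult.left_commute)
  have "w = 0" if "L w = 0" for w
  proof -
    have root: "w $ r = 0" and harmonic: "p \<noteq> r \<Longrightarrow> w $ p = (\<Sum>q\<in>UNIV. A p q * w $ q)" for p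
      using arg_cong[OF that, of "\<lambda>z. z $ r"] arg_cong[OF that, of "\<lambda>z. z $ p"]
      by (auto simp: L_nth split: if_splits)
    have "w $ p \<le> 0" for p
      by (rule maximum_principle[of "\<lambda>q. w $ q" r]) (simp_all add: root harmonic)
    moreover have "- w $ p \<le> 0" for p
      by (rule maximum_principle[of "\<lambda>q. - w $ q" r]) (simp_all add: root harmonic sum_negf)
    ultimately show ?thesis by (simp add: vec_eq_iff order_antisym)
  qed
  then have "surj L"
    using lin by (intro linear_injective_imp_surjective) (simp_all add: linear_injective_0)
  then obtain w where w: "L w = (\<chi> p. if p = r then 0 else f p)"
    by (metis surjE)
  have "(if p = r then w $ r else w $ p - (\<Sum>q\<in>UNIV. A p q * w $ q)) = (if p = r then 0 else f p)" for p
    using arg_cong[OF w, of "\<lambda>z. z $ p"] by (simp add: L_nth)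
  then show ?thesis
    by (intro exI[of _ "\<lambda>q. w $ q"]) (metis diff_eq_eq add.commute)
qed

lemma dirichlet_comparison:
  assumes h: "h r = 0" "\<And>p. p \<noteq> r \<Longrightarrow> h p = 1 + (\<Sum>q\<in>UNIV. A p q * h q)"
    and v: "\<And>p. p \<noteq> r \<Longrightarrow> v p = g p + (\<Sum>q\<in>UNIV. A p q * v q)"
    and g: "\<And>p. p \<noteq> r \<Longrightarrow> g p \<le> b"
  shows "v p - v r \<le> b * h p"
proof -
  have "v p - v r - b * h p \<le> 0"
  proof (rule maximum_principle[of "\<lambda>q. v q - v r - b * h q" r])
    fix p assume "p \<noteq> r"
    have "(\<Sum>q\<in>UNIV. A p q * (v q - v r - b * h q))
        = (\<Sum>q\<in>UNIV. A p q * v q) - (\<Sum>q\<in>UNIV. A p q) * v r - b * (\<Sum>q\<in>UNIV. A p q * h q)"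
      by (simp add: algebra_simps sum_subtractf sum_distrib_left sum_distrib_right sum.distrib)
    then show "v p - v r - b * h p \<le> (\<Sum>q\<in>UNIV. A p q * (v q - v r - b * h q))"
      using h(2) v g \<open>p \<noteq> r\<close> row_sum[of p] by (simp add: algebra_simps)
  qed (simp add: h(1))
  then show ?thesis by simp
qed

lemma x_min_pos: "0 < x_min A"
  and x_min_le: "A p q > 0 \<Longrightarrow> x_min A \<le> A p q"
  and x_min_le_one: "x_min A \<le> 1"
proof -
  define S where "S = {A p q | p q. A p q > 0}"
  have "finite S"
    unfolding S_def by (rule finite_subset[of _ "(\<lambda>(p, q). A p q) ` UNIV"]) auto
  obtain q0 where q0: "A p q0 > 0"
  proof (rule ccontr)
    assume "\<not> thesis"
    then have "A p q \<le> 0" for q using that not_less by blast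
    then have "A p q = 0" for q using nonneg by (meson order_antisym)
    then show False using row_sum[of p] by simp
  qed
  then have "S \<noteq> {}" unfolding S_def by auto
  show "0 < x_min A"
    using \<open>finite S\<close> \<open>S \<noteq> {}\<close> unfolding x_min_def S_def[symmetric] by (auto simp: S_def)
  show le: "x_min A \<le> A p' q'" if "A p' q' > 0" for p' q'
    using \<open>finite S\<close> that unfolding x_min_def S_def[symmetric] by (intro Min_le) (auto simp: S_def)
  show "x_min A \<le> 1"
    using le[OF q0] entry_le_one[of p q0] by simp
qed

text \<open>With M the maximum of h, the sets U k grow along reversed edges by the recurrence
  for h, so after CARD('q) - 1 rounds they contain a maximiser of h.\<close>
lemma hitting_function_bound:
  assumes h: "h r = 0" "\<And>p. p \<noteq> r \<Longrightarrow> h p = 1 + (\<Sum>q\<in>UNIV. A p q * h q)"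
  shows "h p \<le> real CARD('q) / x_min A ^ CARD('q)"
proof -
  define n where "n = CARD('q)"
  define x where "x = x_min A"
  have x: "0 < x" "x \<le> 1" using x_min_pos x_min_le_one unfolding x_def by auto
  define M where "M = Max (range h)"
  have le_M: "h q \<le> M" for q unfolding M_def by simp
  have M_nonneg: "M \<ge> 0" using le_M[of r] h(1) by simp
  define U where "U k = {p. h p \<le> real k + M * (1 - x ^ k)}" for k
  have mono: "U k \<subseteq> U (Suc k)" for k
  proof -
    have "M * (1 - x ^ k) \<le> M * (1 - x ^ Suc k)"
      using M_nonneg x power_decreasing[of k "Suc k" x] by (intro mult_left_mono) auto
    then show ?thesis unfolding U_def by auto
  qed
  have step: "a \<in> U (Suc k)" if ab: "A a b > 0" "b \<in> U k" for a b k
  proof (cases "a = r")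
    case True
    then show ?thesis
      using h(1) M_nonneg x power_le_one[of x "Suc k"] by (simp add: U_def)
  next
    case False
    define y where "y = A a b"
    have y: "x \<le> y" "y \<le> 1" unfolding y_def x_def using x_min_le ab entry_le_one by auto
    have "h a \<le> 1 + (y * h b + (1 - y) * M)"
      using h(2)[OF False] row_average_le[of h M a b] le_M unfolding y_def by fastforce
    also have "y * h b \<le> y * (real k + M * (1 - x ^ k))"
      using ab(2) y x by (intro mult_left_mono) (auto simp: U_def)
    finally have "h a \<le> 1 + y * real k + M - M * (y * x ^ k)" by (simp add: algebra_simps)
    moreover have "y * real k \<le> real k" using y x by (intro mult_left_le_one_le) auto
    moreover have "M * (x * x ^ k) \<le> M * (y * x ^ k)"
      using M_nonneg y x by (intro mult_left_mono mult_right_mono) auto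
    ultimately show ?thesis by (simp add: U_def algebra_simps)
  qed
  have "r \<in> U 0" using h(1) by (simp add: U_def)
  then have "U (n - 1) = UNIV"
    unfolding n_def using mono step by (rule strongly_connected_growth_exhausts[OF irreducible])
  moreover have "M \<in> range h" unfolding M_def by (rule Max_in) auto
  ultimately have "M \<le> real (n - 1) + M * (1 - x ^ (n - 1))" unfolding U_def by auto
  then have "M * x ^ (n - 1) \<le> real (n - 1)" by (simp add: algebra_simps)
  moreover have "M * x ^ n \<le> M * x ^ (n - 1)"
    using M_nonneg x by (intro mult_left_mono power_decreasing) auto
  ultimately have "M * x ^ n \<le> real n" by linarith
  then have "M \<le> real n / x ^ n" using x by (simp add: pos_le_divide_eq)
  then show ?thesis using le_M[of p] unfolding n_def x_def by simp
qed

lemma dirichlet_solution_oscillation: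
  assumes v: "\<And>p. p \<noteq> r \<Longrightarrow> v p = g p + (\<Sum>q\<in>UNIV. A p q * v q)"
    and g: "\<And>p. p \<noteq> r \<Longrightarrow> lo \<le> g p" "\<And>p. p \<noteq> r \<Longrightarrow> g p \<le> hi"
    and signs: "lo \<le> 0" "0 \<le> hi"
  shows "Max (range v) - Min (range v) \<le> (hi - lo) * (real CARD('q) / x_min A ^ CARD('q))"
proof -
  define K where "K = real CARD('q) / x_min A ^ CARD('q)"
  obtain h where h: "h r = 0" "\<And>p. p \<noteq> r \<Longrightarrow> h p = 1 + (\<Sum>q\<in>UNIV. A p q * h q)"
    using dirichlet_problem_solvable[of r "\<lambda>_. 1"] by blast
  have h_le_K: "h p \<le> K" for p
    unfolding K_def by (rule hitting_function_bound[OF h])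
  have "v p - v r \<le> hi * h p" for p
    using g(2) by (intro dirichlet_comparison[OF h v])
  moreover have "- v p - - v r \<le> - lo * h p" for p
    using g(1) v by (intro dirichlet_comparison[OF h, of "\<lambda>q. - v q" "\<lambda>q. - g q"])
      (auto simp: sum_negf)
  moreover have "hi * h p \<le> hi * K" "- lo * h p \<le> - lo * K" for p
    using h_le_K signs by (auto intro: mult_left_mono mult_left_mono_neg)
  ultimately have "v p \<le> v r + hi * K" "v r + lo * K \<le> v p" for p
    by (smt (verit) mult_minus_left)+
  then have "Max (range v) \<le> v r + hi * K" "v r + lo * K \<le> Min (range v)"
    by simp_all
  moreover have "hi * K - lo * K = (hi - lo) * K" by (simp add: left_diff_distrib)
  ultimately show ?thesis unfolding K_def by linarith
qed

lemma invariant_distribution_pos: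
  assumes "invariant_distribution A \<alpha>"
  shows "\<alpha> q > 0"
proof -
  note inv = assms[unfolded invariant_distribution_def]
  obtain p where p: "\<alpha> p > 0"
  proof (rule ccontr)
    assume "\<not> thesis"
    then have "\<alpha> p \<le> 0" for p using that not_less by blast
    then have "\<alpha> p = 0" for p using inv by (meson order_antisym)
    then show False using inv by simp
  qed
  have "(p, q) \<in> {(a, b). A a b > 0}\<^sup>*"
    using irreducible unfolding strongly_connected_def by blast
  then show ?thesis
  proof (induction rule: rtrancl_induct)
    case base
    show ?case using p .
  next
    case (step y z)
    have "\<alpha> y * A y z \<le> (\<Sum>p\<in>UNIV. \<alpha> p * A p z)"
      using inv nonneg by (intro member_le_sum) auto
    moreover have "\<alpha> y * A y z > 0" using step by simp
    ultimately show ?case using inv by simp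
  qed
qed

text \<open>The defect of the equation is supported on the root, and its average under the
  invariant distribution vanishes.\<close>
lemma dirichlet_solution_at_root:
  assumes inv: "invariant_distribution A \<alpha>" and centred: "(\<Sum>p\<in>UNIV. \<alpha> p * g p) = 0"
    and v: "\<And>p. p \<noteq> r \<Longrightarrow> v p = g p + (\<Sum>q\<in>UNIV. A p q * v q)"
  shows "v p = g p + (\<Sum>q\<in>UNIV. A p q * v q)"
proof -
  define defect where "defect p = g p + (\<Sum>q\<in>UNIV. A p q * v q) - v p" for p
  have "(\<Sum>p\<in>UNIV. \<alpha> p * (\<Sum>q\<in>UNIV. A p q * v q)) = (\<Sum>p\<in>UNIV. \<Sum>q\<in>UNIV. \<alpha> p * A p q * v q)"
    by (simp add: sum_distrib_left mult.assoc)
  also have "\<dots> = (\<Sum>q\<in>UNIV. (\<Sum>p\<in>UNIV. \<alpha> p * A p q) * v q)"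
    by (subst sum.swap) (simp add: sum_distrib_right)
  also have "\<dots> = (\<Sum>q\<in>UNIV. \<alpha> q * v q)"
    using inv unfolding invariant_distribution_def by simp
  finally have "(\<Sum>p\<in>UNIV. \<alpha> p * defect p) = 0"
    using centred by (simp add: defect_def algebra_simps sum.distrib sum_subtractf)
  moreover have "(\<Sum>p\<in>UNIV. \<alpha> p * defect p) = \<alpha> r * defect r"
    using v by (subst sum.remove[of UNIV r]) (auto simp: defect_def)
  ultimately have "defect r = 0" using invariant_distribution_pos[OF inv, of r] by simp
  then show ?thesis using v by (cases "p = r") (auto simp: defect_def)
qed

end


lemma X_mat_eq: "X_mat PP p q = PP p (-1) q + PP p 0 q + PP p 1 q"
  by (simp add: X_mat_def)

lemma drift_eq: "drift PP p = (\<Sum>q\<in>UNIV. PP p 1 q - PP p (-1) q)"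
  by (simp add: drift_def)

lemma pOC_PP_nonneg: "pOC d0 dP P0 PP \<Longrightarrow> PP p c q \<ge> 0"
  unfolding pOC_def by (metis less_eq_real_def order_refl)

lemma pOC_PP_outside: "pOC d0 dP P0 PP \<Longrightarrow> c \<notin> {-1, 0, 1} \<Longrightarrow> PP p c q = 0"
  unfolding pOC_def by blast

lemma pOC_X_mat_row_sum: "pOC d0 dP P0 PP \<Longrightarrow> (\<Sum>q\<in>UNIV. X_mat PP p q) = 1"
  unfolding pOC_def X_mat_def by simp

lemma pOC_P0_row_sum: "pOC d0 dP P0 PP \<Longrightarrow> (\<Sum>q\<in>UNIV. P0 p 0 q + P0 p 1 q) = 1"
  unfolding pOC_def by simp

lemma pOC_irreducible_stochastic_matrix:
  assumes "pOC d0 dP P0 PP" and "strongly_connected (X_mat PP)"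
  shows "irreducible_stochastic_matrix (X_mat PP)"
  using assms pOC_PP_nonneg[OF assms(1)] pOC_X_mat_row_sum[OF assms(1)]
  by unfold_locales (auto simp: X_mat_eq)

lemma pOC_abs_drift_le_one:
  assumes "pOC d0 dP P0 PP"
  shows "\<bar>drift PP p\<bar> \<le> 1"
proof -
  have "\<bar>drift PP p\<bar> \<le> (\<Sum>q\<in>UNIV. \<bar>PP p 1 q - PP p (-1) q\<bar>)"
    unfolding drift_eq by (rule sum_abs)
  also have "\<dots> \<le> (\<Sum>q\<in>UNIV. X_mat PP p q)"
  proof (intro sum_mono)
    fix q
    show "\<bar>PP p 1 q - PP p (-1) q\<bar> \<le> X_mat PP p q"
      using pOC_PP_nonneg[OF assms, of p "-1" q] pOC_PP_nonneg[OF assms, of p 0 q]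
        pOC_PP_nonneg[OF assms, of p 1 q]
      by (simp add: X_mat_eq abs_le_iff)
  qed
  finally show ?thesis using pOC_X_mat_row_sum[OF assms] by simp
qed

lemma abs_sum_distribution_le:
  fixes s :: "'a::finite \<Rightarrow> real"
  assumes "\<And>p. \<alpha> p \<ge> 0" "(\<Sum>p\<in>UNIV. \<alpha> p) = 1" "\<And>p. \<bar>s p\<bar> \<le> 1"
  shows "\<bar>\<Sum>p\<in>UNIV. \<alpha> p * s p\<bar> \<le> 1"
proof -
  have "\<bar>\<Sum>p\<in>UNIV. \<alpha> p * s p\<bar> \<le> (\<Sum>p\<in>UNIV. \<alpha> p * \<bar>s p\<bar>)"
    using sum_abs[of "\<lambda>p. \<alpha> p * s p" UNIV] assms(1) by (simp add: abs_mult)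
  also have "\<dots> \<le> (\<Sum>p\<in>UNIV. \<alpha> p)"
    using assms(1,3) by (intro sum_mono mult_left_le) auto
  finally show ?thesis using assms(2) by simp
qed

lemma MA_prob_sum_positive:
  assumes "pOC d0 dP P0 PP" and "c \<ge> 1"
  shows "(\<Sum>y\<in>UNIV \<times> {..Suc c}. MA_prob P0 PP (p, c) y * F y)
    = (\<Sum>q\<in>UNIV. PP p (-1) q * F (q, c - 1) + PP p 0 q * F (q, c) + PP p 1 q * F (q, Suc c))"
proof -
  have "(\<Sum>c'\<in>{..Suc c}. PP p (int c' - int c) q * F (q, c'))
      = (\<Sum>c'\<in>{c - 1, c, Suc c}. PP p (int c' - int c) q * F (q, c'))" for q
    using assms by (intro sum.mono_neutral_right) (auto simp: pOC_PP_outside)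
  also have "\<dots> q = PP p (-1) q * F (q, c - 1) + PP p 0 q * F (q, c) + PP p 1 q * F (q, Suc c)" for q
    using \<open>c \<ge> 1\<close> by (cases c) (auto simp: algebra_simps)
  finally show ?thesis
    using \<open>c \<ge> 1\<close> by (simp add: sum.cartesian_product' MA_prob_def)
qed

lemma MA_prob_sum_zero:
  "(\<Sum>y\<in>UNIV \<times> {..Suc 0}. MA_prob P0 PP (p, 0) y * F y)
    = (\<Sum>q\<in>UNIV. P0 p 0 q * F (q, 0) + P0 p 1 q * F (q, 1))"
  by (simp add: sum.cartesian_product' MA_prob_def atMost_Suc add.commute)

lemma MA_prob_total:
  assumes "pOC d0 dP P0 PP"
  shows "(\<Sum>y\<in>UNIV \<times> {..Suc c}. MA_prob P0 PP (p, c) y) = 1"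
proof (cases "c = 0")
  case True
  then show ?thesis
    using MA_prob_sum_zero[of P0 PP p "\<lambda>_. 1"] pOC_P0_row_sum[OF assms] by simp
next
  case False
  then show ?thesis
    using MA_prob_sum_positive[OF assms, of c p "\<lambda>_. 1"] pOC_X_mat_row_sum[OF assms]
    by (simp add: X_mat_eq)
qed

lemma m_proc_cong: "(\<And>j. j \<le> n \<Longrightarrow> x j = y j) \<Longrightarrow> m_proc v t x n = m_proc v t y n"
proof (induction n)
  case (Suc n)
  then have "(\<forall>j<Suc n. 1 \<le> snd (x j)) = (\<forall>j<Suc n. 1 \<le> snd (y j))"
    and "m_proc v t x n = m_proc v t y n" and "x (Suc n) = y (Suc n)"
    by auto
  then show ?case by (simp only: m_proc.simps)
qed simp

lemma m_proc_unstopped: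
  "(\<forall>j<n. 1 \<le> snd (x j)) \<Longrightarrow> m_proc v t x n = real (snd (x n)) + v (fst (x n)) - real n * t"
  by (cases n) auto

lemma pOC_martingale_m_proc:
  assumes poc: "pOC d0 dP P0 PP"
    and poisson: "\<And>p. v p = drift PP p - t + (\<Sum>q\<in>UNIV. X_mat PP p q * v q)"
  shows "pOC_martingale P0 PP (m_proc v t)"
  unfolding pOC_martingale_def
proof (intro allI impI)
  fix x :: "nat \<Rightarrow> 'a config" and n
  obtain p c where xn: "x n = (p, c)" by (cases "x n")
  show "(\<Sum>y\<in>UNIV \<times> {..Suc (snd (x n))}. MA_prob P0 PP (x n) y * m_proc v t (x(Suc n := y)) (Suc n))
      = m_proc v t x n"
  proof (cases "\<forall>j<Suc n. 1 \<le> snd (x j)")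
    case False
    then have "m_proc v t (x(Suc n := y)) (Suc n) = m_proc v t x n" for y
      by (auto intro: m_proc_cong)
    then show ?thesis
      using MA_prob_total[OF poc, where c = c and p = p] xn by (simp add: sum_distrib_right[symmetric])
  next
    case True
    then have "c \<ge> 1" using xn by (metis lessI snd_conv)
    define T where "T = real (Suc n) * t"
    have "m_proc v t (x(Suc n := y)) (Suc n) = real (snd y) + v (fst y) - T" for y
      using True by (simp add: T_def)
    then have "(\<Sum>y\<in>UNIV \<times> {..Suc (snd (x n))}. MA_prob P0 PP (x n) y * m_proc v t (x(Suc n := y)) (Suc n))
        = (\<Sum>y\<in>UNIV \<times> {..Suc c}. MA_prob P0 PP (p, c) y * (real (snd y) + v (fst y) - T))"
      using xn by simp
    also have "\<dots> = (\<Sum>q\<in>UNIV. PP p (-1) q * (real (c - 1) + v q - T) + PP p 0 q * (real c + v q - T)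
        + PP p 1 q * (real (Suc c) + v q - T))"
      using MA_prob_sum_positive[OF poc \<open>c \<ge> 1\<close>, where F = "\<lambda>y. real (snd y) + v (fst y) - T"]
      by simp
    also have "\<dots> = (\<Sum>q\<in>UNIV. X_mat PP p q * (real c + v q - T) + (PP p 1 q - PP p (-1) q))"
      using \<open>c \<ge> 1\<close> by (simp add: X_mat_eq of_nat_diff algebra_simps)
    also have "\<dots> = (\<Sum>q\<in>UNIV. X_mat PP p q) * (real c - T) + (\<Sum>q\<in>UNIV. X_mat PP p q * v q) + drift PP p"
      unfolding drift_eq sum_distrib_right sum.distrib[symmetric] by (simp add: algebra_simps)
    also have "\<dots> = real c - T + (\<Sum>q\<in>UNIV. X_mat PP p q * v q) + drift PP p"
      using pOC_X_mat_row_sum[OF poc, of p] by simp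
    also have "\<dots> = m_proc v t x n"
      using m_proc_unstopped[of n x v t] True xn poisson[of p] by (simp add: T_def algebra_simps)
    finally show ?thesis .
  qed
qed

theorem mainTheorem11:
  fixes d0 dP :: "('q::finite \<times> int \<times> 'q) set"
    and P0 PP :: "'q \<Rightarrow> int \<Rightarrow> 'q \<Rightarrow> real"
    and \<alpha> :: "'q \<Rightarrow> real"
  assumes "pOC d0 dP P0 PP"
    and "strongly_connected (X_mat PP)"
    and "invariant_distribution (X_mat PP) \<alpha>"
  shows "\<exists>v :: 'q \<Rightarrow> real.
           pOC_martingale P0 PP (m_proc v (trend PP \<alpha>)) \<and>
           Max (range v) - Min (range v)
             \<le> 2 * real (card (UNIV :: 'q set)) / x_min (X_mat PP) ^ card (UNIV :: 'q set)"
proof -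
  interpret irreducible_stochastic_matrix "X_mat PP"
    using assms(1,2) by (rule pOC_irreducible_stochastic_matrix)
  define t where "t = trend PP \<alpha>"
  define K where "K = real CARD('q) / x_min (X_mat PP) ^ CARD('q)"
  define g where "g p = drift PP p - t" for p
  fix r :: 'q
  obtain v where v: "\<And>p. p \<noteq> r \<Longrightarrow> v p = g p + (\<Sum>q\<in>UNIV. X_mat PP p q * v q)"
    using dirichlet_problem_solvable[of r g] by blast
  have \<alpha>: "\<And>p. \<alpha> p \<ge> 0" "(\<Sum>p\<in>UNIV. \<alpha> p) = 1"
    using assms(3) unfolding invariant_distribution_def by auto
  then have "(\<Sum>p\<in>UNIV. \<alpha> p * g p) = 0"
    by (simp add: g_def t_def trend_def right_diff_distrib sum_subtractf flip: sum_distrib_right)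
  then have poisson: "v p = g p + (\<Sum>q\<in>UNIV. X_mat PP p q * v q)" for p
    using dirichlet_solution_at_root[OF assms(3)] v by blast
  have "\<bar>t\<bar> \<le> 1"
    unfolding t_def trend_def using \<alpha> pOC_abs_drift_le_one[OF assms(1)] by (rule abs_sum_distribution_le)
  then have "Max (range v) - Min (range v) \<le> ((1 - t) - (- 1 - t)) * K"
    unfolding K_def using pOC_abs_drift_le_one[OF assms(1)]
    by (intro dirichlet_solution_oscillation[OF v]) (auto simp: g_def abs_le_iff)
  then show ?thesis
    using pOC_martingale_m_proc[OF assms(1) poisson[unfolded g_def]]
    unfolding K_def t_def by (intro exI[of _ v] conjI) simp_all
qed

end
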